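(* Let $\theta$ satisfy Condition 1 with constants $0\le\sigma<1$, $\kappa\ge0$, $A\ge0$, and let $\beta\in\mathbb{R}$. Then the product $\mathfrak{S}_\theta=\prod_p(1+\theta_p/p)$ converges absolutely, and there is a constant $C(\theta,\beta)$ depending only on $\theta$ and $\beta$ such that for $x\ge2$ \[ \sum_{n\le x}n^\beta\phi_\theta(n)=\mathfrak{S}_\theta M_\beta(x)+C(\theta,\beta)+O_{\sigma,\kappa,A,\beta}\big(x^{\sigma+\beta}(\log x)^\kappa\big). \]
   Context: $p$ denotes a prime. Let $\theta:\mathbb{N}\to\mathbb{C}$, $n\mapsto\theta_n$, be a multiplicative function supported on square-free integers; the $\theta$-totient is $\phi_\theta(n)=\prod_{p\mid n}(1+\theta_p)=\sum_{d\mid n}\theta_d$. Condition 1: there are constants $0\le\sigma<1$ and $\kappa,A\ge0$ such that $\sum_{p\le x}|\theta_p|p^{-\sigma}\le\kappa\log\log x+A$ for all $x\ge2$. For real $\beta$, $M_\beta(x)=x^{\beta+1}/(\beta+1)$ if $\beta\ne-1$ and $M_{-1}(x)=\log x$. *)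

theory Defs
  imports "HOL-Analysis.Analysis" "HOL-Computational_Algebra.Squarefree"
begin

definition theta_admissible :: "(nat \<Rightarrow> complex) \<Rightarrow> bool" where
  "theta_admissible \<theta> \<longleftrightarrow>
     \<theta> 1 = 1 \<and>
     (\<forall>m n. coprime m n \<longrightarrow> \<theta> (m * n) = \<theta> m * \<theta> n) \<and>
     (\<forall>n. \<not> squarefree n \<longrightarrow> \<theta> n = 0)"

definition phi_theta :: "(nat \<Rightarrow> complex) \<Rightarrow> nat \<Rightarrow> complex" where
  "phi_theta \<theta> n = (\<Sum>d | d dvd n. \<theta> d)"

definition condition1 :: "(nat \<Rightarrow> complex) \<Rightarrow> real \<Rightarrow> real \<Rightarrow> real \<Rightarrow> bool" where
  "condition1 \<theta> \<sigma> \<kappa> A \<longleftrightarrow>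
     (\<forall>x::real. x \<ge> 2 \<longrightarrow>
        (\<Sum>p | prime p \<and> real p \<le> x. norm (\<theta> p) * real p powr (-\<sigma>)) \<le> \<kappa> * ln (ln x) + A)"

text \<open>Factors of the Euler product \<open>\<prod>_p (1 + \<theta>_p / p)\<close>, indexed by all naturals
  (factor 1 at non-primes).\<close>
definition euler_factor :: "(nat \<Rightarrow> complex) \<Rightarrow> nat \<Rightarrow> complex" where
  "euler_factor \<theta> n = (if prime n then 1 + \<theta> n / of_nat n else 1)"

definition singular_series :: "(nat \<Rightarrow> complex) \<Rightarrow> complex" where
  "singular_series \<theta> = prodinf (euler_factor \<theta>)"

definition M_beta :: "real \<Rightarrow> real \<Rightarrow> real" where
  "M_beta \<beta> x = (if \<beta> = -1 then ln x else x powr (\<beta> + 1) / (\<beta> + 1))"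

end

theory Submission
  imports Defs "HOL-Real_Asymp.Real_Asymp"
begin

text \<open>
  Since phi_theta is the Dirichlet convolution of theta with 1, exchanging the order of summation
  gives sum_{n<=x} n^beta phi_theta(n) = sum_{d<=x} theta_d d^beta T(x/d), where
  T(y) = sum_{m<=y} m^beta = M_beta(y) + c_beta + O(y^beta). Substituting this expansion leaves three
  sums over d <= x. In the first, d^beta M_beta(x/d) = M_beta(x)/d (plus a logarithmic correction
  when beta = -1), and sum_d theta_d/d is the Euler product; the second is a convergent series or
  is small; the third is O(x^beta sum_{d<=x} |theta_d|).
  Everything is controlled by Rankin's trick: multiplicativity and Condition 1 give
  sum_{d<=y} |theta_d| d^-sigma <= prod_{p<=y} (1 + |theta_p| p^-sigma) <= e^A (log y)^kappa, and
  summing this over the dyadic blocks 2^j x < d <= 2^(j+1) x bounds every tail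
  sum_{d>x} |theta_d| d^(delta-sigma) with delta < 0 by a constant times x^delta (log x)^kappa.
  The constants depend on theta only through sigma, kappa and A, so the bound is uniform in theta.
\<close>

section \<open>Squarefree numbers and products over primes\<close>

lemma multiplicative_prod_primes:
  fixes h :: "nat \<Rightarrow> 'a::comm_monoid_mult"
  assumes "h 1 = 1" "\<And>m n. coprime m n \<Longrightarrow> h (m * n) = h m * h n"
    and "finite P" "\<forall>p\<in>P. prime p"
  shows "h (\<Prod>P) = (\<Prod>p\<in>P. h p)"
  using assms(3,4)
proof (induction P rule: finite_induct)
  case (insert p P)
  have "coprime p (\<Prod>P)"
    using insert by (intro prod_coprime_right) (auto intro: primes_coprime)
  with insert show ?case by (simp add: assms(2))
qed (use assms(1) in simp)

lemma prime_factors_prod_primes: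
  assumes "finite P" "\<forall>p\<in>P. prime (p::nat)"
  shows "prime_factors (\<Prod>P) = P"
  using assms by (subst prime_factors_prod) (auto simp: prime_prime_factors dest: prime_gt_0_nat)

lemma squarefree_eq_prod_prime_factors:
  assumes "squarefree (d::nat)"
  shows "d = \<Prod>(prime_factors d)"
proof -
  have "d \<noteq> 0" using assms by (metis not_squarefree_0)
  hence "d = (\<Prod>p \<in> prime_factors d. p ^ multiplicity p d)" using prime_factorization_nat by auto
  also have "\<dots> = \<Prod>(prime_factors d)"
    using assms \<open>d \<noteq> 0\<close> by (intro prod.cong) (auto simp: squarefree_factorial_semiring')
  finally show ?thesis .
qed

lemma finite_primes_le: "finite {p::nat. prime p \<and> p \<le> n}"
  by (rule finite_subset[of _ "{..n}"]) auto

abbreviation squarefree_smooth :: "nat \<Rightarrow> nat set" where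
  "squarefree_smooth n \<equiv> Prod ` Pow {p. prime p \<and> p \<le> n}"

lemma inj_on_Prod_Pow_primes:
  assumes "finite P" "\<forall>p\<in>P. prime (p::nat)"
  shows "inj_on Prod (Pow P)"
proof (rule inj_onI)
  fix D E assume "D \<in> Pow P" "E \<in> Pow P" "\<Prod>D = \<Prod>E"
  with assms show "D = E"
    using prime_factors_prod_primes[of D] prime_factors_prod_primes[of E]
    by (metis PowD finite_subset subset_iff)
qed

lemma squarefree_in_squarefree_smooth:
  assumes "squarefree d" "d \<le> n"
  shows "d \<in> squarefree_smooth n"
proof
  have "d \<noteq> 0" using assms by (metis not_squarefree_0)
  then show "prime_factors d \<in> Pow {p. prime p \<and> p \<le> n}"
    using assms by (auto dest!: dvd_imp_le)
qed (rule squarefree_eq_prod_prime_factors[OF assms(1)])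

lemma squarefree_smooth_pos: "d \<in> squarefree_smooth n \<Longrightarrow> d > 0"
  by (auto intro!: prod_pos dest: prime_gt_0_nat)

lemma sum_squarefree_smooth_multiplicative:
  fixes h :: "nat \<Rightarrow> 'a::comm_semiring_1"
  assumes "h 1 = 1" "\<And>m n. coprime m n \<Longrightarrow> h (m * n) = h m * h n"
  shows "(\<Sum>d\<in>squarefree_smooth n. h d) = (\<Prod>p | prime p \<and> p \<le> n. 1 + h p)"
proof -
  have "(\<Sum>d\<in>squarefree_smooth n. h d) = (\<Sum>D\<in>Pow {p. prime p \<and> p \<le> n}. h (\<Prod>D))"
    by (rule sum.reindex_cong[OF inj_on_Prod_Pow_primes[OF finite_primes_le]]) auto
  also have "\<dots> = (\<Sum>D\<in>Pow {p. prime p \<and> p \<le> n}. \<Prod>p\<in>D. h p)"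
  proof (intro sum.cong refl)
    fix D assume "D \<in> Pow {p. prime p \<and> p \<le> n}"
    then have "finite D" "\<forall>p\<in>D. prime p"
      using finite_subset[OF _ finite_primes_le] by auto
    then show "h (\<Prod>D) = (\<Prod>p\<in>D. h p)" using assms by (intro multiplicative_prod_primes)
  qed
  also have "\<dots> = (\<Prod>p | prime p \<and> p \<le> n. 1 + h p)"
    using prod_add[OF finite_primes_le, of h "\<lambda>_. 1"] by (simp add: add.commute)
  finally show ?thesis .
qed

section \<open>Partial sums of \<open>n powr \<beta>\<close>\<close>

definition power_sum :: "real \<Rightarrow> real \<Rightarrow> real" where
  "power_sum \<beta> y = (\<Sum>m=1..nat \<lfloor>y\<rfloor>. real m powr \<beta>)"

definition power_sum_error :: "real \<Rightarrow> nat \<Rightarrow> real" where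
  "power_sum_error \<beta> n = power_sum \<beta> (real n) - M_beta \<beta> (real n)"

lemma M_beta_has_real_derivative:
  assumes "t > 0"
  shows "(M_beta \<beta> has_real_derivative t powr \<beta>) (at t)"
proof (cases "\<beta> = -1")
  case True
  then show ?thesis
    using DERIV_ln[OF assms] assms by (simp add: M_beta_def[abs_def] powr_minus)
next
  case False
  then have "M_beta \<beta> = (\<lambda>x. x powr (\<beta> + 1) / (\<beta> + 1))"
    by (auto simp: M_beta_def)
  moreover have "((\<lambda>x. x powr (\<beta> + 1) / (\<beta> + 1)) has_real_derivative
      (\<beta> + 1) * t powr (\<beta> + 1 - 1) / (\<beta> + 1)) (at t)"
    by (intro DERIV_cdivide has_real_derivative_powr assms)
  ultimately show ?thesis
    using False by (simp add: add_eq_0_iff)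
qed

lemma M_beta_mean_value:
  assumes "0 < a" "a \<le> b"
  obtains \<xi> where "a \<le> \<xi>" "\<xi> \<le> b" "M_beta \<beta> b - M_beta \<beta> a = (b - a) * \<xi> powr \<beta>"
proof (cases "a = b")
  case False
  with assms have "a < b" by simp
  from MVT2[OF this, of "M_beta \<beta>" "\<lambda>t. t powr \<beta>"] assms M_beta_has_real_derivative
  obtain \<xi> where "a < \<xi>" "\<xi> < b" "M_beta \<beta> b - M_beta \<beta> a = (b - a) * \<xi> powr \<beta>"
    by fastforce
  then show ?thesis by (intro that) auto
qed (use that in auto)

lemma powr_le_two_powr_abs_mult:
  fixes y t :: real
  assumes "0 < y" "y / 2 \<le> t" "t \<le> y"
  shows "t powr \<beta> \<le> 2 powr \<bar>\<beta>\<bar> * y powr \<beta>"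
proof (cases "\<beta> \<ge> 0")
  case True
  then have "t powr \<beta> \<le> y powr \<beta>" using assms by (intro powr_mono2) auto
  also have "\<dots> \<le> 2 powr \<bar>\<beta>\<bar> * y powr \<beta>"
    by (simp add: mult_le_cancel_right1 ge_one_powr_ge_zero)
  finally show ?thesis .
next
  case False
  then have "t powr \<beta> \<le> (y / 2) powr \<beta>" using assms by (intro powr_mono2') auto
  also have "\<dots> = 2 powr \<bar>\<beta>\<bar> * y powr \<beta>"
    using False assms by (simp add: powr_divide powr_minus divide_simps)
  finally show ?thesis .
qed

lemma power_sum_Suc: "power_sum \<beta> (real (Suc n)) = power_sum \<beta> (real n) + real (Suc n) powr \<beta>"
  unfolding power_sum_def floor_of_nat nat_int by simp

text \<open>With \<open>s\<close> the direction of monotonicity of \<open>t powr \<beta>\<close>, the increments of the error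
  lie between \<open>0\<close> and those of \<open>n powr \<beta>\<close>; this avoids a case distinction on the sign of
  \<open>\<beta>\<close> in the telescoping argument.\<close>
lemma power_sum_error_increment:
  fixes \<beta> :: real
  assumes "n \<ge> 1"
  defines "s \<equiv> if \<beta> \<ge> 0 then 1 else -1 :: real"
  shows "0 \<le> s * (power_sum_error \<beta> (Suc n) - power_sum_error \<beta> n)"
    and "s * (power_sum_error \<beta> (Suc n) - power_sum_error \<beta> n)
           \<le> s * (real (Suc n) powr \<beta> - real n powr \<beta>)"
proof -
  obtain \<xi> where \<xi>: "real n \<le> \<xi>" "\<xi> \<le> real (Suc n)"
    "M_beta \<beta> (real (Suc n)) - M_beta \<beta> (real n) = (real (Suc n) - real n) * \<xi> powr \<beta>"
    using M_beta_mean_value[of "real n" "real (Suc n)" \<beta>] assms by auto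
  have incr: "power_sum_error \<beta> (Suc n) - power_sum_error \<beta> n = real (Suc n) powr \<beta> - \<xi> powr \<beta>"
    unfolding power_sum_error_def power_sum_Suc using \<xi>(3) by simp
  have "s * \<xi> powr \<beta> \<le> s * real (Suc n) powr \<beta> \<and> s * real n powr \<beta> \<le> s * \<xi> powr \<beta>"
    using \<xi> assms by (auto simp: s_def intro: powr_mono2 powr_mono2')
  then show "0 \<le> s * (power_sum_error \<beta> (Suc n) - power_sum_error \<beta> n)"
    and "s * (power_sum_error \<beta> (Suc n) - power_sum_error \<beta> n)
           \<le> s * (real (Suc n) powr \<beta> - real n powr \<beta>)"
    unfolding incr by (simp_all add: right_diff_distrib)
qed

lemma abs_power_sum_error_diff_le:
  assumes "1 \<le> n" "n \<le> m"
  shows "\<bar>power_sum_error \<beta> m - power_sum_error \<beta> n\<bar> \<le> \<bar>real m powr \<beta> - real n powr \<beta>\<bar>"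
proof -
  define s where "s = (if \<beta> \<ge> 0 then 1 else -1 :: real)"
  have "0 \<le> s * (power_sum_error \<beta> m - power_sum_error \<beta> n) \<and>
        s * (power_sum_error \<beta> m - power_sum_error \<beta> n) \<le> s * (real m powr \<beta> - real n powr \<beta>)"
    using assms(2)
  proof (induction m rule: dec_induct)
    case (step m)
    with power_sum_error_increment[of m \<beta>] assms(1) show ?case
      unfolding s_def by (simp add: algebra_simps)
  qed simp
  moreover have "\<bar>s\<bar> = 1" by (simp add: s_def)
  ultimately show ?thesis
    by (metis abs_mult abs_of_nonneg mult_1 order_trans abs_ge_self)
qed

lemma power_sum_error_converges:
  assumes "\<beta> < 0"
  obtains c where "\<And>n. n \<ge> 1 \<Longrightarrow> \<bar>power_sum_error \<beta> n - c\<bar> \<le> real n powr \<beta>"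
proof -
  have diff_le: "\<bar>power_sum_error \<beta> m - power_sum_error \<beta> n\<bar> \<le> real n powr \<beta>"
    if "1 \<le> n" "n \<le> m" for m n
  proof -
    have "real m powr \<beta> \<le> real n powr \<beta>" using that assms by (intro powr_mono2') auto
    then show ?thesis
      using abs_power_sum_error_diff_le[OF that, of \<beta>] powr_ge_zero[of "real m" \<beta>] by linarith
  qed
  have "Cauchy (power_sum_error \<beta>)"
  proof (rule metric_CauchyI)
    fix e :: real assume "e > 0"
    have "(\<lambda>n. real n powr \<beta>) \<longlonglongrightarrow> 0" using assms by real_asymp
    then obtain M where M: "\<And>n. n \<ge> M \<Longrightarrow> real n powr \<beta> < e / 2"
      using \<open>e > 0\<close> unfolding lim_sequentially
      by (metis diff_zero half_gt_zero abs_of_nonneg powr_ge_zero dist_real_def)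
    have "dist (power_sum_error \<beta> m) (power_sum_error \<beta> n) < e" if "m \<ge> M + 1" "n \<ge> M + 1" for m n
      using diff_le[of "M + 1" m] diff_le[of "M + 1" n] M[of "M + 1"] that
      by (simp add: dist_real_def)
    then show "\<exists>M. \<forall>m\<ge>M. \<forall>n\<ge>M. dist (power_sum_error \<beta> m) (power_sum_error \<beta> n) < e"
      by blast
  qed
  then obtain c where c: "power_sum_error \<beta> \<longlonglongrightarrow> c"
    using Cauchy_convergent_iff convergent_def by blast
  show ?thesis
  proof (rule that)
    fix n :: nat assume "n \<ge> 1"
    have "(\<lambda>m. \<bar>power_sum_error \<beta> m - power_sum_error \<beta> n\<bar>) \<longlonglongrightarrow> \<bar>c - power_sum_error \<beta> n\<bar>"
      by (intro tendsto_intros c)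
    moreover have "eventually (\<lambda>m. \<bar>power_sum_error \<beta> m - power_sum_error \<beta> n\<bar> \<le> real n powr \<beta>) sequentially"
      using diff_le \<open>n \<ge> 1\<close> by (auto simp: eventually_sequentially)
    ultimately have "\<bar>c - power_sum_error \<beta> n\<bar> \<le> real n powr \<beta>"
      by (rule tendsto_upperbound) simp
    then show "\<bar>power_sum_error \<beta> n - c\<bar> \<le> real n powr \<beta>" by simp
  qed
qed

lemma power_sum_error_asymp_nat:
  obtains c K where "\<And>n. n \<ge> 1 \<Longrightarrow> \<bar>power_sum_error \<beta> n - c\<bar> \<le> K * real n powr \<beta>"
proof (cases "\<beta> < 0")
  case True
  then show ?thesis
    using power_sum_error_converges that[where K = 1] by (metis mult_1)
next
  case False
  show ?thesis
  proof (rule that[of 0 "\<bar>power_sum_error \<beta> 1\<bar> + 1"])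
    fix n :: nat assume "n \<ge> 1"
    have one: "1 \<le> real n powr \<beta>" using False \<open>n \<ge> 1\<close> by (intro ge_one_powr_ge_zero) auto
    have "\<bar>power_sum_error \<beta> n\<bar> \<le> \<bar>power_sum_error \<beta> 1\<bar> + \<bar>real n powr \<beta> - 1\<bar>"
      using abs_power_sum_error_diff_le[of 1 n \<beta>] \<open>n \<ge> 1\<close> by simp
    also have "\<dots> \<le> \<bar>power_sum_error \<beta> 1\<bar> * real n powr \<beta> + real n powr \<beta>"
      using one by (intro add_mono) (auto simp: mult_le_cancel_left1)
    finally show "\<bar>power_sum_error \<beta> n - 0\<bar> \<le> (\<bar>power_sum_error \<beta> 1\<bar> + 1) * real n powr \<beta>"
      by (simp add: algebra_simps)
  qed
qed

lemma power_sum_asymp: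
  obtains c K where "K \<ge> 0" "\<And>y. y \<ge> 1 \<Longrightarrow> \<bar>power_sum \<beta> y - M_beta \<beta> y - c\<bar> \<le> K * y powr \<beta>"
proof -
  obtain c K where cK: "\<And>n. n \<ge> 1 \<Longrightarrow> \<bar>power_sum_error \<beta> n - c\<bar> \<le> K * real n powr \<beta>"
    using power_sum_error_asymp_nat by blast
  have "K \<ge> 0" using cK[of 1] by simp
  show ?thesis
  proof (rule that[of "(K + 1) * 2 powr \<bar>\<beta>\<bar>" c])
    show "(K + 1) * 2 powr \<bar>\<beta>\<bar> \<ge> 0" using \<open>K \<ge> 0\<close> by simp
    fix y :: real assume y: "y \<ge> 1"
    define N where "N = nat \<lfloor>y\<rfloor>"
    have "real N = of_int \<lfloor>y\<rfloor>" "N \<ge> 1" using y by (simp_all add: N_def le_nat_floor)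
    then have N: "N \<ge> 1" "y / 2 \<le> real N" "real N \<le> y" "y - real N \<le> 1"
      using y by linarith+
    obtain \<xi> where \<xi>: "real N \<le> \<xi>" "\<xi> \<le> y" "M_beta \<beta> y - M_beta \<beta> (real N) = (y - real N) * \<xi> powr \<beta>"
      using M_beta_mean_value[of "real N" y \<beta>] N by auto
    have "power_sum \<beta> y = power_sum \<beta> (real N)"
      by (simp add: power_sum_def N_def)
    then have "power_sum \<beta> y - M_beta \<beta> y - c = (power_sum_error \<beta> N - c) - (y - real N) * \<xi> powr \<beta>"
      using \<xi>(3) by (simp add: power_sum_error_def)
    then have "\<bar>power_sum \<beta> y - M_beta \<beta> y - c\<bar> \<le> \<bar>power_sum_error \<beta> N - c\<bar> + (y - real N) * \<xi> powr \<beta>"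
      using N abs_triangle_ineq4[of "power_sum_error \<beta> N - c" "(y - real N) * \<xi> powr \<beta>"] by simp
    also have "\<dots> \<le> K * real N powr \<beta> + \<xi> powr \<beta>"
      using cK[OF N(1)] N by (intro add_mono mult_left_le_one_le) auto
    also have "\<dots> \<le> K * (2 powr \<bar>\<beta>\<bar> * y powr \<beta>) + 2 powr \<bar>\<beta>\<bar> * y powr \<beta>"
      using N \<xi> \<open>K \<ge> 0\<close> by (intro add_mono mult_left_mono powr_le_two_powr_abs_mult) auto
    finally show "\<bar>power_sum \<beta> y - M_beta \<beta> y - c\<bar> \<le> (K + 1) * 2 powr \<bar>\<beta>\<bar> * y powr \<beta>"
      by (simp add: algebra_simps)
  qed
qed

section \<open>Exchanging the divisor sum\<close>

lemma sum_divisors_swap: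
  fixes f :: "nat \<Rightarrow> nat \<Rightarrow> 'a::comm_monoid_add"
  shows "(\<Sum>n=1..N. \<Sum>d | d dvd n. f d n) = (\<Sum>d=1..N. \<Sum>m=1..N div d. f d (d * m))"
proof -
  have multiples: "(\<Sum>m=1..N div d. f d (d * m)) = (\<Sum>n | n \<in> {1..N} \<and> d dvd n. f d n)"
    if "d \<in> {1..N}" for d
  proof -
    have "(\<lambda>m. d * m) ` {1..N div d} = {n. n \<in> {1..N} \<and> d dvd n}"
    proof (intro equalityI subsetI)
      fix n assume "n \<in> {n. n \<in> {1..N} \<and> d dvd n}"
      then obtain m where "n = d * m" "1 \<le> d * m" "d * m \<le> N" by auto
      with that show "n \<in> (\<lambda>m. d * m) ` {1..N div d}"
        by (auto simp: less_eq_div_iff_mult_less_eq mult.commute intro!: image_eqI[of _ _ m])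
    qed (use that in \<open>auto simp: less_eq_div_iff_mult_less_eq mult.commute\<close>)
    moreover have "inj_on (\<lambda>m. d * m) {1..N div d}" using that by (auto simp: inj_on_def)
    ultimately show ?thesis by (metis (no_types, lifting) sum.reindex_cong)
  qed
  have "(\<Sum>n=1..N. \<Sum>d | d dvd n. f d n) = (\<Sum>n=1..N. \<Sum>d | d \<in> {1..N} \<and> d dvd n. f d n)"
    by (intro sum.cong refl arg_cong2[where f = sum]) (auto dest: dvd_imp_le)
  also have "\<dots> = (\<Sum>d=1..N. \<Sum>n | n \<in> {1..N} \<and> d dvd n. f d n)"
    by (rule sum.swap_restrict[symmetric]) auto
  also have "\<dots> = (\<Sum>d=1..N. \<Sum>m=1..N div d. f d (d * m))"
    by (intro sum.cong refl multiples[symmetric])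
  finally show ?thesis .
qed

lemma sum_powr_mult_divisor_sum:
  fixes g :: "nat \<Rightarrow> complex"
  assumes "x \<ge> 0"
  shows "(\<Sum>n=1..nat \<lfloor>x\<rfloor>. of_real (real n powr \<beta>) * (\<Sum>d | d dvd n. g d))
       = (\<Sum>d=1..nat \<lfloor>x\<rfloor>. g d * of_real (real d powr \<beta> * power_sum \<beta> (x / real d)))"
proof -
  have floor_div: "nat \<lfloor>x / real d\<rfloor> = nat \<lfloor>x\<rfloor> div d" for d
    using floor_divide_real_eq_div[of "int d" x] assms by (simp add: nat_div_distrib)
  have "(\<Sum>n=1..nat \<lfloor>x\<rfloor>. of_real (real n powr \<beta>) * (\<Sum>d | d dvd n. g d))
      = (\<Sum>n=1..nat \<lfloor>x\<rfloor>. \<Sum>d | d dvd n. g d * of_real (real n powr \<beta>))"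
    by (simp add: sum_distrib_left mult.commute)
  also have "\<dots> = (\<Sum>d=1..nat \<lfloor>x\<rfloor>. \<Sum>m=1..nat \<lfloor>x\<rfloor> div d. g d * of_real (real (d * m) powr \<beta>))"
    by (rule sum_divisors_swap)
  also have "\<dots> = (\<Sum>d=1..nat \<lfloor>x\<rfloor>. g d * of_real (real d powr \<beta> * power_sum \<beta> (x / real d)))"
    by (simp add: power_sum_def floor_div powr_mult sum_distrib_left)
  finally show ?thesis .
qed

lemma sum_powr_phi_theta_split:
  fixes \<theta> :: "nat \<Rightarrow> complex"
  assumes "x \<ge> 0"
  shows "(\<Sum>n=1..nat \<lfloor>x\<rfloor>. of_real (real n powr \<beta>) * phi_theta \<theta> n)
       = (\<Sum>d=1..nat \<lfloor>x\<rfloor>. \<theta> d * of_real (real d powr \<beta> * M_beta \<beta> (x / real d)))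
         + of_real c * (\<Sum>d=1..nat \<lfloor>x\<rfloor>. \<theta> d * of_real (real d powr \<beta>))
         + (\<Sum>d=1..nat \<lfloor>x\<rfloor>.
              \<theta> d * of_real (real d powr \<beta> * (power_sum \<beta> (x / real d) - M_beta \<beta> (x / real d) - c)))"
  unfolding phi_theta_def sum_powr_mult_divisor_sum[OF assms]
  by (simp add: sum_distrib_left algebra_simps flip: sum.distrib)

section \<open>Tail sums and dyadic blocks\<close>

lemma le_nat_floor_iff: "0 \<le> x \<Longrightarrow> n \<le> nat \<lfloor>x\<rfloor> \<longleftrightarrow> real n \<le> x"
  by (simp add: le_nat_iff le_floor_iff)

lemma finite_nat_real_interval: "finite {d::nat. x < real d \<and> real d \<le> z}"
  by (rule finite_subset[of _ "{..nat \<lfloor>z\<rfloor>}"]) (auto simp: le_nat_floor)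

lemma summable_tail_of_bounded_interval_sums:
  fixes b :: "nat \<Rightarrow> real" and x :: real
  defines "c \<equiv> \<lambda>d. if x < real d then b d else 0"
  assumes b_nonneg: "\<And>d. x < real d \<Longrightarrow> b d \<ge> 0"
    and bK: "\<And>z. (\<Sum>d | x < real d \<and> real d \<le> z. b d) \<le> K"
  shows "summable c" and "suminf c \<le> K"
proof -
  have partial_sums: "sum c {..<n} \<le> K" for n
  proof -
    have "sum c {..<n} = (\<Sum>d | d < n \<and> x < real d. b d)"
      by (intro sum.mono_neutral_cong_right) (auto simp: c_def)
    also have "\<dots> \<le> (\<Sum>d | x < real d \<and> real d \<le> real n. b d)"
      using b_nonneg by (intro sum_mono2 finite_nat_real_interval) auto
    finally show ?thesis using bK[of "real n"] by linarith
  qed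
  show "summable c"
    using partial_sums b_nonneg by (intro summableI_nonneg_bounded) (auto simp: c_def)
  then show "suminf c \<le> K"
    using partial_sums by (rule suminf_le_const)
qed

lemma summable_tail_bound:
  fixes f :: "nat \<Rightarrow> 'a::banach" and b :: "nat \<Rightarrow> real"
  assumes "x \<ge> 0" "f 0 = 0"
    and fb: "\<And>d. x < real d \<Longrightarrow> norm (f d) \<le> b d"
    and bK: "\<And>z. (\<Sum>d | x < real d \<and> real d \<le> z. b d) \<le> K"
  shows "summable f" and "norm (suminf f - (\<Sum>d=1..nat \<lfloor>x\<rfloor>. f d)) \<le> K"
proof -
  define tail where "tail d = (if x < real d then f d else 0)" for d
  define c where "c d = (if x < real d then b d else 0)" for d
  have b_nonneg: "b d \<ge> 0" if "x < real d" for d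
    using fb[OF that] norm_ge_zero[of "f d"] by linarith
  have c: "summable c" "suminf c \<le> K"
    using summable_tail_of_bounded_interval_sums[OF b_nonneg bK] by (simp_all add: c_def[abs_def])
  have tail_le: "norm (tail d) \<le> c d" for d
    using fb[of d] by (simp add: tail_def c_def)
  have tail: "summable tail"
    by (rule summable_comparison_test[OF _ c(1)]) (use tail_le in auto)
  have "(\<lambda>d. f d - tail d) sums (\<Sum>d=1..nat \<lfloor>x\<rfloor>. f d - tail d)"
  proof (rule sums_finite)
    fix d assume "d \<notin> {1..nat \<lfloor>x\<rfloor>}"
    then show "f d - tail d = 0"
      using assms(2) by (cases "d = 0") (auto simp: tail_def not_less dest: le_nat_floor)
  qed simp
  moreover have "(\<Sum>d=1..nat \<lfloor>x\<rfloor>. f d - tail d) = (\<Sum>d=1..nat \<lfloor>x\<rfloor>. f d)"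
    using assms(1) by (intro sum.cong) (auto simp: tail_def le_nat_floor_iff)
  ultimately have head: "(\<lambda>d. f d - tail d) sums (\<Sum>d=1..nat \<lfloor>x\<rfloor>. f d)" by simp
  show "summable f"
    using summable_add[OF sums_summable[OF head] tail] by simp
  have "suminf f = (\<Sum>d=1..nat \<lfloor>x\<rfloor>. f d) + suminf tail"
    using suminf_add[OF sums_summable[OF head] tail] sums_unique[OF head] by simp
  then have "norm (suminf f - (\<Sum>d=1..nat \<lfloor>x\<rfloor>. f d)) = norm (suminf tail)" by simp
  also have "\<dots> \<le> suminf c"
    by (rule norm_suminf_le[OF tail_le c(1)])
  finally show "norm (suminf f - (\<Sum>d=1..nat \<lfloor>x\<rfloor>. f d)) \<le> K"
    using c(2) by linarith
qed

definition dyadic_sum :: "real \<Rightarrow> real \<Rightarrow> real" where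
  "dyadic_sum \<delta> q = (\<Sum>j. (2 powr \<delta>) ^ j * (real j + 2) powr q)"

lemma summable_dyadic_sum:
  assumes "\<delta> < 0"
  shows "summable (\<lambda>j. (2 powr \<delta>) ^ j * (real j + 2) powr q)"
proof -
  define a where "a = \<delta> * ln 2"
  have a: "a < 0" using assms by (simp add: a_def mult_neg_pos)
  have eq: "(2 powr \<delta>) ^ j = exp (a * real j)" for j
    by (simp add: a_def powr_def exp_of_nat_mult[symmetric] mult_ac)
  have "(\<lambda>j. exp (a * real j) * (real j + 2) powr q) \<in> O(\<lambda>j. exp (a / 2 * real j))"
    using a by real_asymp
  moreover have "norm (exp (a / 2 * real j)) = exp (a / 2) ^ j" for j
    using exp_of_nat_mult[of j "a / 2"] by (simp add: mult.commute)
  then have "summable (\<lambda>j. norm (exp (a / 2 * real j)))"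
    using a by (simp add: summable_geometric)
  ultimately show ?thesis
    unfolding eq by (rule summable_comparison_test_bigo[rotated])
qed

lemma sum_le_dyadic_sum:
  "\<delta> < 0 \<Longrightarrow> (\<Sum>j<J. (2 powr \<delta>) ^ j * (real j + 2) powr q) \<le> dyadic_sum \<delta> q"
  unfolding dyadic_sum_def by (intro sum_le_suminf summable_dyadic_sum) auto

lemma dyadic_sum_nonneg: "\<delta> < 0 \<Longrightarrow> dyadic_sum \<delta> q \<ge> 0"
  unfolding dyadic_sum_def by (intro suminf_nonneg summable_dyadic_sum) auto

lemma two_power_mult_powr:
  fixes x :: real
  assumes "x > 0"
  shows "(2 ^ j * x) powr \<delta> = (2 powr \<delta>) ^ j * x powr \<delta>"
proof -
  have "((2::real) ^ j) powr \<delta> = (2 powr real j) powr \<delta>" by (simp add: powr_realpow)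
  also have "\<dots> = (2 powr \<delta>) ^ j" by (simp add: powr_powr mult.commute flip: powr_realpow)
  finally show ?thesis using assms by (simp add: powr_mult)
qed

lemma ln_dyadic_le:
  fixes x :: real
  assumes "x \<ge> 1"
  shows "ln (2 ^ Suc j * x) + 1 \<le> (real j + 2) * (ln x + 1)"
proof -
  have "ln (2 ^ Suc j * x) = real (Suc j) * ln 2 + ln x"
    using assms by (simp add: ln_mult ln_realpow distrib_right)
  also have "\<dots> \<le> real (Suc j) + ln x"
    using ln_le_minus_one[of 2] by (simp add: mult_left_le)
  moreover have "(real j + 2) * (ln x + 1) = real (Suc j) + 1 + ln x + (real j + 1) * ln x"
    by (simp add: algebra_simps)
  moreover have "0 \<le> (real j + 1) * ln x" using assms by simp
  ultimately show ?thesis by linarith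
qed

lemma dyadic_weight_le:
  fixes x t :: real
  assumes x: "x \<ge> 1" and \<delta>: "\<delta> < 0" and t: "2 ^ j * x < t" "t \<le> 2 ^ Suc j * x"
  shows "t powr (\<delta> - \<sigma>) * (1 + ln (t / x)) ^ p \<le> (2 ^ j * x) powr \<delta> * (real j + 2) ^ p * t powr (-\<sigma>)"
proof -
  have "x \<le> 2 ^ j * x" using x by (simp add: mult_le_cancel_right1)
  with x t have "1 \<le> 2 ^ j * x" "x < t" by linarith+
  have "t powr (\<delta> - \<sigma>) = t powr \<delta> * t powr (-\<sigma>)" by (simp flip: powr_add)
  also have "\<dots> \<le> (2 ^ j * x) powr \<delta> * t powr (-\<sigma>)"
    using t \<open>1 \<le> 2 ^ j * x\<close> \<delta> by (intro mult_right_mono powr_mono2') auto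
  finally have powr_le: "t powr (\<delta> - \<sigma>) \<le> (2 ^ j * x) powr \<delta> * t powr (-\<sigma>)" .
  have "ln (t / x) \<le> ln (2 ^ Suc j)"
    using t x \<open>x < t\<close> by (intro ln_mono) (auto simp: field_simps)
  also have "\<dots> = real (Suc j) * ln 2" by (simp only: ln_realpow)
  also have "\<dots> \<le> real (Suc j)"
    using ln_le_minus_one[of 2] by (intro mult_left_le) auto
  finally have "(1 + ln (t / x)) ^ p \<le> (real j + 2) ^ p"
    using \<open>x < t\<close> x by (intro power_mono) auto
  with powr_le have "t powr (\<delta> - \<sigma>) * (1 + ln (t / x)) ^ p \<le> ((2 ^ j * x) powr \<delta> * t powr (-\<sigma>)) * (real j + 2) ^ p"
    using \<open>x < t\<close> x by (intro mult_mono) auto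
  then show ?thesis by (simp add: mult_ac)
qed

lemma ln_add_one_powr_le:
  fixes x \<kappa> :: real
  assumes "x \<ge> 2" "\<kappa> \<ge> 0"
  shows "(ln x + 1) powr \<kappa> \<le> (1 + 1 / ln 2) powr \<kappa> * ln x powr \<kappa>"
proof -
  have "ln 2 \<le> ln x" using assms by simp
  then have "ln x + 1 \<le> (1 + 1 / ln 2) * ln x" by (simp add: field_simps)
  then have "(ln x + 1) powr \<kappa> \<le> ((1 + 1 / ln 2) * ln x) powr \<kappa>"
    using assms by (intro powr_mono2) auto
  also have "\<dots> = (1 + 1 / ln 2) powr \<kappa> * ln x powr \<kappa>"
    using assms by (simp add: powr_mult)
  finally show ?thesis .
qed

lemma norm_mult_log_ratio_le:
  fixes a :: complex
  assumes "1 \<le> y" "y < real d"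
  shows "norm (a * of_real ((ln (real d) - ln y) / real d))
           \<le> norm a * real d powr ((\<sigma> - 1) - \<sigma>) * (1 + ln (real d / y)) ^ 1"
proof -
  have "ln (real d) - ln y = ln (real d / y)" using assms by (simp add: ln_div)
  moreover have "0 \<le> ln (real d / y)" using assms by simp
  ultimately have "norm (a * of_real ((ln (real d) - ln y) / real d)) = norm a * ln (real d / y) / real d"
    by (simp add: norm_mult norm_divide)
  also have "\<dots> \<le> norm a * (1 + ln (real d / y)) / real d"
    by (intro divide_right_mono mult_left_mono) auto
  finally show ?thesis by (simp add: powr_minus_divide)
qed

section \<open>Weights satisfying Condition 1\<close>

text \<open>The implied constants of the two error terms. They depend on \<open>\<sigma>, \<kappa>, \<beta>\<close> but not on
  \<open>\<theta>\<close>, which is what makes the final bound uniform in \<open>\<theta>\<close>.\<close>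
definition main_term_const :: "real \<Rightarrow> real \<Rightarrow> real \<Rightarrow> real" where
  "main_term_const \<sigma> \<kappa> \<beta> =
     (if \<beta> = -1 then dyadic_sum (\<sigma> - 1) (\<kappa> + 1) else dyadic_sum (\<sigma> - 1) \<kappa> / \<bar>\<beta> + 1\<bar>)"

definition secondary_term_const :: "real \<Rightarrow> real \<Rightarrow> real \<Rightarrow> real" where
  "secondary_term_const \<sigma> \<kappa> \<beta> = (if \<beta> + \<sigma> < 0 then dyadic_sum (\<beta> + \<sigma>) \<kappa> else 1)"

lemma main_term_const_nonneg: "\<sigma> < 1 \<Longrightarrow> main_term_const \<sigma> \<kappa> \<beta> \<ge> 0"
  by (simp add: main_term_const_def dyadic_sum_nonneg)

lemma secondary_term_const_nonneg: "secondary_term_const \<sigma> \<kappa> \<beta> \<ge> 0"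
  by (simp add: secondary_term_const_def dyadic_sum_nonneg)

locale theta_condition1 =
  fixes \<theta> :: "nat \<Rightarrow> complex" and \<sigma> \<kappa> A :: real
  assumes admissible: "theta_admissible \<theta>" and condition1: "condition1 \<theta> \<sigma> \<kappa> A"
    and \<sigma>_nonneg: "0 \<le> \<sigma>" and \<sigma>_less_1: "\<sigma> < 1" and \<kappa>_nonneg: "0 \<le> \<kappa>" and A_nonneg: "0 \<le> A"
begin

lemma theta_1 [simp]: "\<theta> (Suc 0) = 1"
  using admissible by (simp add: theta_admissible_def)

lemma theta_mult: "coprime m n \<Longrightarrow> \<theta> (m * n) = \<theta> m * \<theta> n"
  using admissible by (simp add: theta_admissible_def)

lemma theta_eq_0_if_not_squarefree: "\<not> squarefree n \<Longrightarrow> \<theta> n = 0"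
  using admissible by (simp add: theta_admissible_def)

lemma theta_0: "\<theta> 0 = 0"
  by (simp add: theta_eq_0_if_not_squarefree)

text \<open>Rankin's trick: the sum is dominated by the Euler product over the primes up to \<open>y\<close>.\<close>
lemma sum_norm_theta_powr_le:
  assumes "y \<ge> 1"
  shows "(\<Sum>d=1..nat \<lfloor>y\<rfloor>. norm (\<theta> d) * real d powr (-\<sigma>)) \<le> exp A * (ln y + 1) powr \<kappa>"
proof (cases "y < 2")
  case True
  then have "nat \<lfloor>y\<rfloor> = 1" using assms by linarith
  moreover have "1 * 1 \<le> exp A * (ln y + 1) powr \<kappa>"
    using assms A_nonneg \<kappa>_nonneg by (intro mult_mono ge_one_powr_ge_zero) auto
  ultimately show ?thesis by simp
next
  case False
  define N where "N = nat \<lfloor>y\<rfloor>"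
  define h where "h d = norm (\<theta> d) * real d powr (-\<sigma>)" for d
  have primes: "{p. prime p \<and> p \<le> N} = {p. prime p \<and> real p \<le> y}"
    using assms by (auto simp: N_def le_nat_floor_iff)
  have "(\<Sum>d=1..N. h d) = (\<Sum>d | d \<in> {1..N} \<and> squarefree d. h d)"
    by (intro sum.mono_neutral_right) (auto simp: h_def theta_eq_0_if_not_squarefree)
  also have "\<dots> \<le> (\<Sum>d\<in>squarefree_smooth N. h d)"
    by (intro sum_mono2) (auto simp: h_def squarefree_in_squarefree_smooth)
  also have "\<dots> = (\<Prod>p | prime p \<and> p \<le> N. 1 + h p)"
    by (intro sum_squarefree_smooth_multiplicative)
      (simp_all add: h_def theta_mult norm_mult powr_mult)
  also have "\<dots> \<le> (\<Prod>p | prime p \<and> p \<le> N. exp (h p))"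
    by (intro prod_mono) (auto simp: h_def)
  also have "\<dots> = exp (\<Sum>p | prime p \<and> real p \<le> y. h p)"
    using finite_primes_le[of N] by (simp add: exp_sum flip: primes)
  also have "\<dots> \<le> exp (\<kappa> * ln (ln y) + A)"
    using condition1 False by (simp add: condition1_def h_def)
  also have "\<dots> = exp A * ln y powr \<kappa>"
    using False by (simp add: powr_def exp_add mult.commute)
  also have "\<dots> \<le> exp A * (ln y + 1) powr \<kappa>"
    using False \<kappa>_nonneg by (intro mult_left_mono powr_mono2) auto
  finally show ?thesis by (simp add: N_def h_def)
qed

lemma sum_norm_theta_powr_le_shifted:
  assumes "x \<ge> 1" "\<gamma> + \<sigma> \<ge> 0"
  shows "(\<Sum>d=1..nat \<lfloor>x\<rfloor>. norm (\<theta> d) * real d powr \<gamma>)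
           \<le> x powr (\<gamma> + \<sigma>) * (exp A * (ln x + 1) powr \<kappa>)"
proof -
  have "(\<Sum>d=1..nat \<lfloor>x\<rfloor>. norm (\<theta> d) * real d powr \<gamma>)
      \<le> (\<Sum>d=1..nat \<lfloor>x\<rfloor>. x powr (\<gamma> + \<sigma>) * (norm (\<theta> d) * real d powr (-\<sigma>)))"
  proof (intro sum_mono)
    fix d assume "d \<in> {1..nat \<lfloor>x\<rfloor>}"
    then have d: "1 \<le> real d" "real d \<le> x" using assms by (auto simp: le_nat_floor_iff)
    have "real d powr \<gamma> = real d powr (\<gamma> + \<sigma>) * real d powr (-\<sigma>)"
      by (simp flip: powr_add)
    also have "\<dots> \<le> x powr (\<gamma> + \<sigma>) * real d powr (-\<sigma>)"
      using d assms by (intro mult_right_mono powr_mono2) auto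
    finally show "norm (\<theta> d) * real d powr \<gamma> \<le> x powr (\<gamma> + \<sigma>) * (norm (\<theta> d) * real d powr (-\<sigma>))"
      by (simp add: mult_left_mono mult.left_commute)
  qed
  also have "\<dots> \<le> x powr (\<gamma> + \<sigma>) * (exp A * (ln x + 1) powr \<kappa>)"
    unfolding sum_distrib_left[symmetric] by (intro mult_left_mono sum_norm_theta_powr_le assms(1)) simp
  finally show ?thesis .
qed

lemma sum_dyadic_block_le:
  assumes x: "x \<ge> 1" and \<delta>: "\<delta> < 0"
  shows "(\<Sum>d | 2 ^ j * x < real d \<and> real d \<le> 2 ^ Suc j * x.
            norm (\<theta> d) * real d powr (\<delta> - \<sigma>) * (1 + ln (real d / x)) ^ p)
         \<le> exp A * x powr \<delta> * (ln x + 1) powr \<kappa> * ((2 powr \<delta>) ^ j * (real j + 2) powr (\<kappa> + real p))"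
proof -
  define u where "u = (2::real) ^ j * x"
  define v where "v = (2::real) ^ Suc j * x"
  have "x \<le> u" "u \<le> v" using x by (simp_all add: u_def v_def mult_le_cancel_right1)
  with x have "1 \<le> u" by linarith
  have "(\<Sum>d | u < real d \<and> real d \<le> v. norm (\<theta> d) * real d powr (\<delta> - \<sigma>) * (1 + ln (real d / x)) ^ p)
      \<le> (\<Sum>d | u < real d \<and> real d \<le> v. (u powr \<delta> * (real j + 2) ^ p) * (norm (\<theta> d) * real d powr (-\<sigma>)))"
    using dyadic_weight_le[OF x \<delta>] by (intro sum_mono) (auto simp: u_def v_def mult_ac mult_left_mono)
  also have "\<dots> \<le> (u powr \<delta> * (real j + 2) ^ p) * (\<Sum>d=1..nat \<lfloor>v\<rfloor>. norm (\<theta> d) * real d powr (-\<sigma>))"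
    unfolding sum_distrib_left[symmetric] using \<open>1 \<le> u\<close> \<open>u \<le> v\<close>
    by (intro mult_left_mono sum_mono2) (auto simp: le_nat_floor)
  also have "\<dots> \<le> (u powr \<delta> * (real j + 2) ^ p) * (exp A * (ln v + 1) powr \<kappa>)"
    using \<open>1 \<le> u\<close> \<open>u \<le> v\<close> by (intro mult_left_mono sum_norm_theta_powr_le) auto
  also have "\<dots> \<le> (u powr \<delta> * (real j + 2) ^ p) * (exp A * ((real j + 2) * (ln x + 1)) powr \<kappa>)"
    using ln_dyadic_le[OF x, of j] \<open>1 \<le> u\<close> \<open>u \<le> v\<close> \<kappa>_nonneg
    by (intro mult_left_mono powr_mono2) (auto simp: v_def)
  also have "\<dots> = exp A * x powr \<delta> * (ln x + 1) powr \<kappa> * ((2 powr \<delta>) ^ j * ((real j + 2) ^ p * (real j + 2) powr \<kappa>))"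
  proof -
    have "u powr \<delta> = (2 powr \<delta>) ^ j * x powr \<delta>" using x by (simp add: u_def two_power_mult_powr)
    moreover have "((real j + 2) * (ln x + 1)) powr \<kappa> = (real j + 2) powr \<kappa> * (ln x + 1) powr \<kappa>"
      using x by (simp add: powr_mult)
    ultimately show ?thesis by (simp add: mult_ac)
  qed
  also have "(real j + 2) ^ p * (real j + 2) powr \<kappa> = (real j + 2) powr (\<kappa> + real p)"
    by (simp add: powr_add powr_realpow)
  finally show ?thesis by (simp add: u_def v_def)
qed

lemma sum_dyadic_le:
  assumes x: "x \<ge> 1" and \<delta>: "\<delta> < 0"
  shows "(\<Sum>d | x < real d \<and> real d \<le> z. norm (\<theta> d) * real d powr (\<delta> - \<sigma>) * (1 + ln (real d / x)) ^ p)
         \<le> exp A * x powr \<delta> * (ln x + 1) powr \<kappa> * dyadic_sum \<delta> (\<kappa> + real p)"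
proof -
  define F where "F d = norm (\<theta> d) * real d powr (\<delta> - \<sigma>) * (1 + ln (real d / x)) ^ p" for d
  define E where "E = exp A * x powr \<delta> * (ln x + 1) powr \<kappa>"
  have blocks: "(\<Sum>d | x < real d \<and> real d \<le> 2 ^ J * x. F d)
      \<le> E * (\<Sum>j<J. (2 powr \<delta>) ^ j * (real j + 2) powr (\<kappa> + real p))" for J
  proof (induction J)
    case 0
    show ?case by (simp add: sum.neutral)
  next
    case (Suc J)
    have x_le: "x \<le> 2 ^ J * x" using x by (simp add: mult_le_cancel_right1)
    have "{d. x < real d \<and> real d \<le> 2 ^ Suc J * x}
        = {d. x < real d \<and> real d \<le> 2 ^ J * x} \<union> {d. 2 ^ J * x < real d \<and> real d \<le> 2 ^ Suc J * x}"
      using x by (auto intro: le_less_trans[OF x_le])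
    then have "(\<Sum>d | x < real d \<and> real d \<le> 2 ^ Suc J * x. F d)
        = (\<Sum>d | x < real d \<and> real d \<le> 2 ^ J * x. F d) + (\<Sum>d | 2 ^ J * x < real d \<and> real d \<le> 2 ^ Suc J * x. F d)"
      by (simp add: sum.union_disjoint[OF finite_nat_real_interval finite_nat_real_interval] disjoint_iff)
    also have "\<dots> \<le> E * (\<Sum>j<Suc J. (2 powr \<delta>) ^ j * (real j + 2) powr (\<kappa> + real p))"
      using Suc.IH sum_dyadic_block_le[OF x \<delta>, where j = J and p = p] by (simp add: E_def F_def algebra_simps)
    finally show ?case .
  qed
  obtain J :: nat where "z \<le> real J" using real_arch_simple by blast
  also have "real J \<le> 2 ^ J" by (metis less_exp less_imp_le of_nat_le_iff of_nat_numeral of_nat_power)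
  also have "\<dots> \<le> 2 ^ J * x" using x by simp
  finally have "z \<le> 2 ^ J * x" .
  then have "(\<Sum>d | x < real d \<and> real d \<le> z. F d) \<le> (\<Sum>d | x < real d \<and> real d \<le> 2 ^ J * x. F d)"
    using x by (intro sum_mono2 finite_nat_real_interval) (auto simp: F_def)
  also have "\<dots> \<le> E * dyadic_sum \<delta> (\<kappa> + real p)"
    using blocks x \<delta> by (intro order_trans[OF blocks] mult_left_mono sum_le_dyadic_sum) (auto simp: E_def)
  finally show ?thesis by (simp add: E_def F_def)
qed

lemma theta_tail_bound:
  fixes f :: "nat \<Rightarrow> 'a::banach"
  assumes "x \<ge> 1" "\<delta> < 0" "f 0 = 0"
    and "\<And>d. x < real d \<Longrightarrow> norm (f d) \<le> norm (\<theta> d) * real d powr (\<delta> - \<sigma>) * (1 + ln (real d / x)) ^ p"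
  shows "summable f"
    and "norm (suminf f - (\<Sum>d=1..nat \<lfloor>x\<rfloor>. f d))
           \<le> exp A * x powr \<delta> * (ln x + 1) powr \<kappa> * dyadic_sum \<delta> (\<kappa> + real p)"
  using summable_tail_bound[OF _ assms(3,4) sum_dyadic_le[OF assms(1,2)]] assms(1) by auto

lemma summable_theta_div:
  shows "summable (\<lambda>d. \<theta> d / of_nat d)" and "summable (\<lambda>d. norm (\<theta> d) / real d)"
proof -
  have weight: "norm (\<theta> d) / real d = norm (\<theta> d) * real d powr ((\<sigma> - 1) - \<sigma>) * (1 + ln (real d / 1)) ^ 0"
    if "1 < real d" for d
    using that by (simp add: powr_minus divide_inverse)
  show "summable (\<lambda>d. \<theta> d / of_nat d)"
    using weight \<sigma>_less_1 by (intro theta_tail_bound(1)[where x = 1 and \<delta> = "\<sigma> - 1" and p = 0]) (auto simp: theta_0 norm_divide)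
  show "summable (\<lambda>d. norm (\<theta> d) / real d)"
    using weight \<sigma>_less_1 by (intro theta_tail_bound(1)[where x = 1 and \<delta> = "\<sigma> - 1" and p = 0]) auto
qed

lemma abs_convergent_prod_euler_factor: "abs_convergent_prod (euler_factor \<theta>)"
proof (rule summable_imp_abs_convergent_prod)
  show "summable (\<lambda>n. norm (euler_factor \<theta> n - 1))"
    by (rule summable_comparison_test[OF _ summable_theta_div(2)])
      (auto simp: euler_factor_def norm_divide)
qed

lemma euler_partial_product:
  "(\<Prod>i\<le>n. euler_factor \<theta> i) = (\<Sum>d\<in>squarefree_smooth n. \<theta> d / of_nat d)"
proof -
  have "(\<Prod>i\<le>n. euler_factor \<theta> i) = (\<Prod>p | prime p \<and> p \<le> n. 1 + \<theta> p / of_nat p)"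
    by (intro prod.mono_neutral_cong_right) (auto simp: euler_factor_def)
  also have "\<dots> = (\<Sum>d\<in>squarefree_smooth n. \<theta> d / of_nat d)"
    by (intro sum_squarefree_smooth_multiplicative[symmetric]) (simp_all add: theta_mult)
  finally show ?thesis .
qed

lemma norm_euler_partial_product_diff_le:
  "norm ((\<Prod>i\<le>n. euler_factor \<theta> i) - (\<Sum>d=1..n. \<theta> d / of_nat d))
     \<le> (\<Sum>d. norm (\<theta> d) / real d) - (\<Sum>d\<le>n. norm (\<theta> d) / real d)"
proof -
  define Q where "Q = squarefree_smooth n"
  have "finite Q" by (simp add: Q_def finite_primes_le)
  have Q_pos: "d \<in> Q \<Longrightarrow> d > 0" for d
    unfolding Q_def by (rule squarefree_smooth_pos)
  have Q_squarefree: "squarefree d \<Longrightarrow> d \<le> n \<Longrightarrow> d \<in> Q" for d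
    unfolding Q_def by (rule squarefree_in_squarefree_smooth)
  have product: "(\<Prod>i\<le>n. euler_factor \<theta> i) = (\<Sum>d\<in>Q. \<theta> d / of_nat d)"
    unfolding Q_def by (rule euler_partial_product)
  have "(\<Sum>d=1..n. \<theta> d / of_nat d) = (\<Sum>d\<in>Q \<inter> {1..n}. \<theta> d / of_nat d)"
  proof (rule sum.mono_neutral_right)
    show "\<forall>d\<in>{1..n} - Q \<inter> {1..n}. \<theta> d / of_nat d = 0"
      using Q_squarefree theta_eq_0_if_not_squarefree by fastforce
  qed auto
  then have "(\<Prod>i\<le>n. euler_factor \<theta> i) - (\<Sum>d=1..n. \<theta> d / of_nat d)
      = (\<Sum>d\<in>Q - {1..n}. \<theta> d / of_nat d)"
    using sum.Int_Diff[OF \<open>finite Q\<close>, of "\<lambda>d. \<theta> d / of_nat d" "{1..n}"] product by simp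
  then have "norm ((\<Prod>i\<le>n. euler_factor \<theta> i) - (\<Sum>d=1..n. \<theta> d / of_nat d))
      \<le> (\<Sum>d\<in>Q - {1..n}. norm (\<theta> d) / real d)"
    by (simp add: norm_divide order_trans[OF norm_sum])
  also have "\<dots> = (\<Sum>d\<in>(Q - {1..n}) \<union> {..n}. norm (\<theta> d) / real d) - (\<Sum>d\<le>n. norm (\<theta> d) / real d)"
  proof -
    have "(Q - {1..n}) \<inter> {..n} = {}" using Q_pos by fastforce
    then show ?thesis using \<open>finite Q\<close> by (simp add: sum.union_disjoint)
  qed
  also have "\<dots> \<le> (\<Sum>d. norm (\<theta> d) / real d) - (\<Sum>d\<le>n. norm (\<theta> d) / real d)"
    using \<open>finite Q\<close> by (intro diff_right_mono sum_le_suminf summable_theta_div) auto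
  finally show ?thesis .
qed

lemma singular_series_eq_suminf: "singular_series \<theta> = (\<Sum>d. \<theta> d / of_nat d)"
proof -
  have "(\<lambda>n. \<Prod>i\<le>n. euler_factor \<theta> i) \<longlonglongrightarrow> singular_series \<theta>"
    unfolding singular_series_def
    by (intro convergent_prod_LIMSEQ abs_convergent_prod_imp_convergent_prod abs_convergent_prod_euler_factor)
  moreover have "(\<lambda>n. \<Prod>i\<le>n. euler_factor \<theta> i) \<longlonglongrightarrow> (\<Sum>d. \<theta> d / of_nat d)"
  proof -
    have "(\<lambda>n. (\<Prod>i\<le>n. euler_factor \<theta> i) - (\<Sum>d=1..n. \<theta> d / of_nat d)) \<longlonglongrightarrow> 0"
    proof (rule tendsto_norm_zero_cancel, rule Lim_null_comparison)
      show "(\<lambda>n. (\<Sum>d. norm (\<theta> d) / real d) - (\<Sum>d\<le>n. norm (\<theta> d) / real d)) \<longlonglongrightarrow> 0"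
        using tendsto_diff[OF tendsto_const summable_LIMSEQ'[OF summable_theta_div(2)],
            of "\<Sum>d. norm (\<theta> d) / real d"] by simp
    qed (intro always_eventually allI, use norm_euler_partial_product_diff_le in simp)
    moreover have "(\<lambda>n. \<Sum>d=1..n. \<theta> d / of_nat d) \<longlonglongrightarrow> (\<Sum>d. \<theta> d / of_nat d)"
    proof -
      have "(\<Sum>d=1..n. \<theta> d / of_nat d) = (\<Sum>d\<le>n. \<theta> d / of_nat d)" for n
        by (intro sum.mono_neutral_left) auto
      then show ?thesis using summable_LIMSEQ'[OF summable_theta_div(1)] by simp
    qed
    ultimately have "(\<lambda>n. ((\<Prod>i\<le>n. euler_factor \<theta> i) - (\<Sum>d=1..n. \<theta> d / of_nat d))
        + (\<Sum>d=1..n. \<theta> d / of_nat d)) \<longlonglongrightarrow> 0 + (\<Sum>d. \<theta> d / of_nat d)"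
      by (rule tendsto_add)
    then show ?thesis by simp
  qed
  ultimately show ?thesis by (rule LIMSEQ_unique)
qed

lemma main_term_estimate_power:
  assumes "\<beta> \<noteq> -1" "x \<ge> 1"
  shows "norm ((\<Sum>d=1..nat \<lfloor>x\<rfloor>. \<theta> d * of_real (real d powr \<beta> * M_beta \<beta> (x / real d)))
                - singular_series \<theta> * of_real (M_beta \<beta> x))
         \<le> exp A * (dyadic_sum (\<sigma> - 1) \<kappa> / \<bar>\<beta> + 1\<bar>) * x powr (\<sigma> + \<beta>) * (ln x + 1) powr \<kappa>"
proof -
  have weight: "norm (\<theta> d / of_nat d) \<le> norm (\<theta> d) * real d powr ((\<sigma> - 1) - \<sigma>) * (1 + ln (real d / x)) ^ 0"
    if "x < real d" for d
    using that assms by (simp add: norm_divide powr_minus_divide)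
  note tail = theta_tail_bound[OF \<open>x \<ge> 1\<close> _ _ weight, unfolded singular_series_eq_suminf[symmetric]]
  have summand: "real d powr \<beta> * M_beta \<beta> (x / real d) = M_beta \<beta> x / real d" if "d > 0" for d
  proof -
    have "real d powr (\<beta> + 1) = real d powr \<beta> * real d" using that by (simp add: powr_add)
    moreover have "real d powr \<beta> \<noteq> 0" using that by simp
    ultimately show ?thesis using that assms by (simp add: M_beta_def powr_divide)
  qed
  have "(\<Sum>d=1..nat \<lfloor>x\<rfloor>. \<theta> d * of_real (real d powr \<beta> * M_beta \<beta> (x / real d)))
      = (\<Sum>d=1..nat \<lfloor>x\<rfloor>. of_real (M_beta \<beta> x) * (\<theta> d / of_nat d))"
    by (intro sum.cong refl) (simp add: summand)
  also have "\<dots> = of_real (M_beta \<beta> x) * (\<Sum>d=1..nat \<lfloor>x\<rfloor>. \<theta> d / of_nat d)"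
    by (simp add: sum_distrib_left)
  finally have sum_eq: "(\<Sum>d=1..nat \<lfloor>x\<rfloor>. \<theta> d * of_real (real d powr \<beta> * M_beta \<beta> (x / real d)))
      = of_real (M_beta \<beta> x) * (\<Sum>d=1..nat \<lfloor>x\<rfloor>. \<theta> d / of_nat d)" .
  have "norm ((\<Sum>d=1..nat \<lfloor>x\<rfloor>. \<theta> d * of_real (real d powr \<beta> * M_beta \<beta> (x / real d)))
                - singular_series \<theta> * of_real (M_beta \<beta> x))
      = norm (of_real (M_beta \<beta> x) * ((\<Sum>d=1..nat \<lfloor>x\<rfloor>. \<theta> d / of_nat d) - singular_series \<theta>))"
    unfolding sum_eq by (simp add: algebra_simps)
  also have "\<dots> = \<bar>M_beta \<beta> x\<bar> * norm (singular_series \<theta> - (\<Sum>d=1..nat \<lfloor>x\<rfloor>. \<theta> d / of_nat d))"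
    by (simp add: norm_mult norm_minus_commute)
  also have "\<dots> \<le> x powr (\<beta> + 1) / \<bar>\<beta> + 1\<bar> * (exp A * x powr (\<sigma> - 1) * (ln x + 1) powr \<kappa> * dyadic_sum (\<sigma> - 1) \<kappa>)"
    using assms tail(2) \<sigma>_less_1 theta_0 by (intro mult_mono) (auto simp: M_beta_def)
  also have "\<dots> = exp A * (dyadic_sum (\<sigma> - 1) \<kappa> / \<bar>\<beta> + 1\<bar>) * x powr (\<sigma> + \<beta>) * (ln x + 1) powr \<kappa>"
    using assms by (simp add: powr_add[symmetric] field_simps)
  finally show ?thesis .
qed

lemma main_term_estimate_log:
  assumes "x \<ge> 1"
  shows "norm ((\<Sum>d=1..nat \<lfloor>x\<rfloor>. \<theta> d * of_real (real d powr -1 * M_beta (-1) (x / real d)))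
                - singular_series \<theta> * of_real (M_beta (-1) x) + (\<Sum>d. \<theta> d * of_real (ln (real d) / real d)))
         \<le> exp A * dyadic_sum (\<sigma> - 1) (\<kappa> + 1) * x powr (\<sigma> - 1) * (ln x + 1) powr \<kappa>"
proof -
  define g where "g y d = \<theta> d * of_real ((ln (real d) - ln y) / real d)" for y d
  have g_weight: "norm (g y d) \<le> norm (\<theta> d) * real d powr ((\<sigma> - 1) - \<sigma>) * (1 + ln (real d / y)) ^ 1"
    if "1 \<le> y" "y < real d" for y d
    unfolding g_def using that by (rule norm_mult_log_ratio_le)
  have g_0: "g y 0 = 0" for y by (simp add: g_def theta_0)
  have g1_summable: "summable (g 1)"
    using g_weight[of 1] \<sigma>_less_1 g_0 by (intro theta_tail_bound(1)[where x = 1 and \<delta> = "\<sigma> - 1" and p = 1]) auto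
  have "g x = (\<lambda>d. g 1 d - of_real (ln x) * (\<theta> d / of_nat d))"
    by (auto simp: g_def diff_divide_distrib algebra_simps)
  then have "(\<Sum>d. g x d) = (\<Sum>d. g 1 d) - of_real (ln x) * (\<Sum>d. \<theta> d / of_nat d)"
    by (simp only: suminf_diff[OF g1_summable summable_mult[OF summable_theta_div(1)], symmetric]
        suminf_mult[OF summable_theta_div(1)])
  moreover have "g 1 = (\<lambda>d. \<theta> d * of_real (ln (real d) / real d))"
    by (auto simp: g_def)
  ultimately have "(\<Sum>d. g x d) = (\<Sum>d. \<theta> d * of_real (ln (real d) / real d)) - of_real (ln x) * singular_series \<theta>"
    by (simp only: singular_series_eq_suminf)
  moreover have "\<theta> d * of_real (real d powr -1 * M_beta (-1) (x / real d)) = - g x d" if "d \<in> {1..nat \<lfloor>x\<rfloor>}" for d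
  proof -
    have "real d powr -1 * M_beta (-1) (x / real d) = - ((ln (real d) - ln x) / real d)"
      using that assms by (simp add: M_beta_def ln_div powr_minus_divide divide_simps)
    then show ?thesis by (simp add: g_def)
  qed
  ultimately have "(\<Sum>d=1..nat \<lfloor>x\<rfloor>. \<theta> d * of_real (real d powr -1 * M_beta (-1) (x / real d)))
                - singular_series \<theta> * of_real (M_beta (-1) x) + (\<Sum>d. \<theta> d * of_real (ln (real d) / real d))
      = (\<Sum>d. g x d) - (\<Sum>d=1..nat \<lfloor>x\<rfloor>. g x d)"
    by (simp add: M_beta_def sum_negf algebra_simps)
  also have "norm \<dots> \<le> exp A * x powr (\<sigma> - 1) * (ln x + 1) powr \<kappa> * dyadic_sum (\<sigma> - 1) (\<kappa> + real 1)"
    using \<sigma>_less_1 assms g_weight g_0 by (intro theta_tail_bound(2)) auto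
  finally show ?thesis by (simp add: mult_ac)
qed

lemma main_term_estimate:
  obtains C where "\<And>x. x \<ge> 1 \<Longrightarrow>
    norm ((\<Sum>d=1..nat \<lfloor>x\<rfloor>. \<theta> d * of_real (real d powr \<beta> * M_beta \<beta> (x / real d)))
          - singular_series \<theta> * of_real (M_beta \<beta> x) - C)
    \<le> exp A * main_term_const \<sigma> \<kappa> \<beta> * x powr (\<sigma> + \<beta>) * (ln x + 1) powr \<kappa>"
proof (cases "\<beta> = -1")
  case True
  then show ?thesis
    using main_term_estimate_log
    by (intro that[of "- (\<Sum>d. \<theta> d * of_real (ln (real d) / real d))"]) (simp add: main_term_const_def)
next
  case False
  then show ?thesis
    using main_term_estimate_power by (intro that[of 0]) (simp add: main_term_const_def)
qed

lemma secondary_term_estimate: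
  obtains C where "\<And>x. x \<ge> 1 \<Longrightarrow>
    norm ((\<Sum>d=1..nat \<lfloor>x\<rfloor>. \<theta> d * of_real (real d powr \<beta>)) - C)
    \<le> exp A * secondary_term_const \<sigma> \<kappa> \<beta> * x powr (\<sigma> + \<beta>) * (ln x + 1) powr \<kappa>"
proof (cases "\<beta> + \<sigma> < 0")
  case True
  have weight: "norm (\<theta> d * of_real (real d powr \<beta>))
      \<le> norm (\<theta> d) * real d powr ((\<beta> + \<sigma>) - \<sigma>) * (1 + ln (real d / x)) ^ 0" for x d
    by (simp add: norm_mult)
  show ?thesis
  proof (rule that[of "\<Sum>d. \<theta> d * of_real (real d powr \<beta>)"])
    fix x :: real assume "x \<ge> 1"
    then show "norm ((\<Sum>d=1..nat \<lfloor>x\<rfloor>. \<theta> d * of_real (real d powr \<beta>)) - (\<Sum>d. \<theta> d * of_real (real d powr \<beta>)))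
        \<le> exp A * secondary_term_const \<sigma> \<kappa> \<beta> * x powr (\<sigma> + \<beta>) * (ln x + 1) powr \<kappa>"
      using theta_tail_bound(2)[OF \<open>x \<ge> 1\<close> True _ weight] True
      by (simp add: norm_minus_commute secondary_term_const_def theta_0 add.commute mult_ac)
  qed
next
  case False
  show ?thesis
  proof (rule that[of 0])
    fix x :: real assume "x \<ge> 1"
    have "norm (\<Sum>d=1..nat \<lfloor>x\<rfloor>. \<theta> d * of_real (real d powr \<beta>))
        \<le> (\<Sum>d=1..nat \<lfloor>x\<rfloor>. norm (\<theta> d) * real d powr \<beta>)"
      by (rule order_trans[OF norm_sum]) (simp add: norm_mult)
    also have "\<dots> \<le> x powr (\<beta> + \<sigma>) * (exp A * (ln x + 1) powr \<kappa>)"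
      using False \<open>x \<ge> 1\<close> by (intro sum_norm_theta_powr_le_shifted) auto
    finally show "norm ((\<Sum>d=1..nat \<lfloor>x\<rfloor>. \<theta> d * of_real (real d powr \<beta>)) - 0)
        \<le> exp A * secondary_term_const \<sigma> \<kappa> \<beta> * x powr (\<sigma> + \<beta>) * (ln x + 1) powr \<kappa>"
      using False by (simp add: secondary_term_const_def add.commute mult_ac)
  qed
qed

lemma remainder_estimate:
  assumes "x \<ge> 1" "K \<ge> 0" "\<And>d. d \<in> {1..nat \<lfloor>x\<rfloor>} \<Longrightarrow> \<bar>R d\<bar> \<le> K * (x / real d) powr \<beta>"
  shows "norm (\<Sum>d=1..nat \<lfloor>x\<rfloor>. \<theta> d * of_real (real d powr \<beta> * R d))
           \<le> K * exp A * x powr (\<sigma> + \<beta>) * (ln x + 1) powr \<kappa>"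
proof -
  have "norm (\<Sum>d=1..nat \<lfloor>x\<rfloor>. \<theta> d * of_real (real d powr \<beta> * R d))
      \<le> (\<Sum>d=1..nat \<lfloor>x\<rfloor>. K * x powr \<beta> * (norm (\<theta> d) * real d powr 0))"
  proof (rule order_trans[OF norm_sum], intro sum_mono)
    fix d assume d: "d \<in> {1..nat \<lfloor>x\<rfloor>}"
    have "norm (\<theta> d * of_real (real d powr \<beta> * R d)) = norm (\<theta> d) * (real d powr \<beta> * \<bar>R d\<bar>)"
      by (simp add: norm_mult abs_mult)
    also have "\<dots> \<le> norm (\<theta> d) * (real d powr \<beta> * (K * (x / real d) powr \<beta>))"
      using assms(3)[OF d] by (intro mult_left_mono) auto
    also have "\<dots> = K * x powr \<beta> * (norm (\<theta> d) * real d powr 0)"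
      using d assms(1) by (simp add: powr_divide)
    finally show "norm (\<theta> d * of_real (real d powr \<beta> * R d)) \<le> K * x powr \<beta> * (norm (\<theta> d) * real d powr 0)" .
  qed
  also have "\<dots> \<le> K * x powr \<beta> * (x powr (0 + \<sigma>) * (exp A * (ln x + 1) powr \<kappa>))"
    unfolding sum_distrib_left[symmetric] using assms \<sigma>_nonneg
    by (intro mult_left_mono sum_norm_theta_powr_le_shifted) auto
  also have "\<dots> = K * exp A * x powr (\<sigma> + \<beta>) * (ln x + 1) powr \<kappa>"
    by (simp add: powr_add mult_ac)
  finally show ?thesis .
qed

lemma partial_sum_estimate:
  assumes "K \<ge> 0" and power_sum: "\<And>y. y \<ge> 1 \<Longrightarrow> \<bar>power_sum \<beta> y - M_beta \<beta> y - c\<bar> \<le> K * y powr \<beta>"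
  obtains C where "\<And>x. x \<ge> 1 \<Longrightarrow>
    norm ((\<Sum>n=1..nat \<lfloor>x\<rfloor>. of_real (real n powr \<beta>) * phi_theta \<theta> n)
          - singular_series \<theta> * of_real (M_beta \<beta> x) - C)
    \<le> exp A * (main_term_const \<sigma> \<kappa> \<beta> + \<bar>c\<bar> * secondary_term_const \<sigma> \<kappa> \<beta> + K)
        * x powr (\<sigma> + \<beta>) * (ln x + 1) powr \<kappa>"
proof -
  obtain C1 where C1: "\<And>x. x \<ge> 1 \<Longrightarrow>
    norm ((\<Sum>d=1..nat \<lfloor>x\<rfloor>. \<theta> d * of_real (real d powr \<beta> * M_beta \<beta> (x / real d)))
          - singular_series \<theta> * of_real (M_beta \<beta> x) - C1)
    \<le> exp A * main_term_const \<sigma> \<kappa> \<beta> * x powr (\<sigma> + \<beta>) * (ln x + 1) powr \<kappa>"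
    using main_term_estimate by blast
  obtain C2 where C2: "\<And>x. x \<ge> 1 \<Longrightarrow>
    norm ((\<Sum>d=1..nat \<lfloor>x\<rfloor>. \<theta> d * of_real (real d powr \<beta>)) - C2)
    \<le> exp A * secondary_term_const \<sigma> \<kappa> \<beta> * x powr (\<sigma> + \<beta>) * (ln x + 1) powr \<kappa>"
    using secondary_term_estimate by blast
  show ?thesis
  proof (rule that[of "C1 + of_real c * C2"])
    fix x :: real assume x: "x \<ge> 1"
    define E where "E = x powr (\<sigma> + \<beta>) * (ln x + 1) powr \<kappa>"
    define main where "main = (\<Sum>d=1..nat \<lfloor>x\<rfloor>. \<theta> d * of_real (real d powr \<beta> * M_beta \<beta> (x / real d)))
      - singular_series \<theta> * of_real (M_beta \<beta> x) - C1"
    define secondary where "secondary = (\<Sum>d=1..nat \<lfloor>x\<rfloor>. \<theta> d * of_real (real d powr \<beta>)) - C2"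
    define remainder where "remainder = (\<Sum>d=1..nat \<lfloor>x\<rfloor>.
      \<theta> d * of_real (real d powr \<beta> * (power_sum \<beta> (x / real d) - M_beta \<beta> (x / real d) - c)))"
    have "(\<Sum>n=1..nat \<lfloor>x\<rfloor>. of_real (real n powr \<beta>) * phi_theta \<theta> n)
          - singular_series \<theta> * of_real (M_beta \<beta> x) - (C1 + of_real c * C2)
        = main + of_real c * secondary + remainder"
      using sum_powr_phi_theta_split[of x \<beta> \<theta> c] x
      by (simp add: main_def secondary_def remainder_def algebra_simps)
    also have "norm \<dots> \<le> norm main + \<bar>c\<bar> * norm secondary + norm remainder"
      using norm_triangle_ineq[of "main + of_real c * secondary" remainder]
        norm_triangle_ineq[of main "of_real c * secondary"] by (simp add: norm_mult)
    also have "\<dots> \<le> exp A * main_term_const \<sigma> \<kappa> \<beta> * E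
        + \<bar>c\<bar> * (exp A * secondary_term_const \<sigma> \<kappa> \<beta> * E) + K * exp A * E"
    proof (intro add_mono mult_left_mono)
      show "norm remainder \<le> K * exp A * E"
        unfolding remainder_def E_def mult.assoc[symmetric] using x \<open>K \<ge> 0\<close>
        by (intro remainder_estimate) (auto simp: le_nat_floor_iff intro!: power_sum)
    qed (use C1[OF x] C2[OF x] in \<open>simp_all add: main_def secondary_def E_def mult.assoc\<close>)
    also have "\<dots> = exp A * (main_term_const \<sigma> \<kappa> \<beta> + \<bar>c\<bar> * secondary_term_const \<sigma> \<kappa> \<beta> + K)
          * x powr (\<sigma> + \<beta>) * (ln x + 1) powr \<kappa>"
      by (simp add: E_def algebra_simps)
    finally show "norm ((\<Sum>n=1..nat \<lfloor>x\<rfloor>. of_real (real n powr \<beta>) * phi_theta \<theta> n)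
        - singular_series \<theta> * of_real (M_beta \<beta> x) - (C1 + of_real c * C2))
      \<le> exp A * (main_term_const \<sigma> \<kappa> \<beta> + \<bar>c\<bar> * secondary_term_const \<sigma> \<kappa> \<beta> + K)
          * x powr (\<sigma> + \<beta>) * (ln x + 1) powr \<kappa>" .
  qed
qed

lemma asymptotic_formula:
  assumes "K \<ge> 0" and "\<And>y. y \<ge> 1 \<Longrightarrow> \<bar>power_sum \<beta> y - M_beta \<beta> y - c\<bar> \<le> K * y powr \<beta>"
  shows "abs_convergent_prod (euler_factor \<theta>) \<and>
    (\<exists>C. \<forall>x\<ge>2. norm ((\<Sum>n=1..nat \<lfloor>x\<rfloor>. of_real (real n powr \<beta>) * phi_theta \<theta> n)
                        - singular_series \<theta> * of_real (M_beta \<beta> x) - C)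
      \<le> exp A * (main_term_const \<sigma> \<kappa> \<beta> + \<bar>c\<bar> * secondary_term_const \<sigma> \<kappa> \<beta> + K) * (1 + 1 / ln 2) powr \<kappa>
          * x powr (\<sigma> + \<beta>) * ln x powr \<kappa>)"
proof -
  define K' where "K' = exp A * (main_term_const \<sigma> \<kappa> \<beta> + \<bar>c\<bar> * secondary_term_const \<sigma> \<kappa> \<beta> + K)"
  have "K' \<ge> 0"
    using assms(1) \<sigma>_less_1 main_term_const_nonneg secondary_term_const_nonneg by (simp add: K'_def)
  obtain C where C: "\<And>x. x \<ge> 1 \<Longrightarrow>
    norm ((\<Sum>n=1..nat \<lfloor>x\<rfloor>. of_real (real n powr \<beta>) * phi_theta \<theta> n)
          - singular_series \<theta> * of_real (M_beta \<beta> x) - C) \<le> K' * x powr (\<sigma> + \<beta>) * (ln x + 1) powr \<kappa>"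
    using partial_sum_estimate[OF assms] unfolding K'_def by blast
  have "K' * x powr (\<sigma> + \<beta>) * (ln x + 1) powr \<kappa> \<le> K' * (1 + 1 / ln 2) powr \<kappa> * x powr (\<sigma> + \<beta>) * ln x powr \<kappa>"
    if "x \<ge> 2" for x
    using mult_left_mono[OF ln_add_one_powr_le[OF that \<kappa>_nonneg], of "K' * x powr (\<sigma> + \<beta>)"] \<open>K' \<ge> 0\<close>
    by (simp add: mult_ac)
  with C have "\<forall>x\<ge>2. norm ((\<Sum>n=1..nat \<lfloor>x\<rfloor>. of_real (real n powr \<beta>) * phi_theta \<theta> n)
          - singular_series \<theta> * of_real (M_beta \<beta> x) - C) \<le> K' * (1 + 1 / ln 2) powr \<kappa> * x powr (\<sigma> + \<beta>) * ln x powr \<kappa>"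
    by (smt (verit) one_le_numeral)
  with abs_convergent_prod_euler_factor show ?thesis unfolding K'_def by blast
qed

end

theorem mainTheorem4:
  fixes \<sigma> \<kappa> A \<beta> :: real
  assumes "0 \<le> \<sigma>" "\<sigma> < 1" "\<kappa> \<ge> 0" "A \<ge> 0"
  shows "\<exists>K::real. \<forall>\<theta>::nat \<Rightarrow> complex.
           theta_admissible \<theta> \<and> condition1 \<theta> \<sigma> \<kappa> A \<longrightarrow>
             abs_convergent_prod (euler_factor \<theta>) \<and>
             (\<exists>C::complex. \<forall>x::real. x \<ge> 2 \<longrightarrow>
                norm ((\<Sum>n=1..nat \<lfloor>x\<rfloor>. of_real (real n powr \<beta>) * phi_theta \<theta> n)
                      - singular_series \<theta> * of_real (M_beta \<beta> x) - C)
                \<le> K * x powr (\<sigma> + \<beta>) * ln x powr \<kappa>)"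
proof -
  obtain c K where "K \<ge> 0" and power_sum:
    "\<And>y. y \<ge> 1 \<Longrightarrow> \<bar>power_sum \<beta> y - M_beta \<beta> y - c\<bar> \<le> K * y powr \<beta>"
    using power_sum_asymp by blast
  have "theta_condition1 \<theta> \<sigma> \<kappa> A" if "theta_admissible \<theta> \<and> condition1 \<theta> \<sigma> \<kappa> A" for \<theta>
    using that assms by unfold_locales auto
  then show ?thesis
    using theta_condition1.asymptotic_formula[OF _ \<open>K \<ge> 0\<close> power_sum] by blast
qed

end
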